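(* Let $G$ be a graph with $n$ vertices and $m$ edges, let $0\leq \alpha <\alpha_0(G)$, and let $p$ be the positive inertia index of $A_{\alpha}(G)$. Then $$S_{p}(A_{\alpha}(G))\leq 2\alpha m +\frac{1}{2}\left(2m(1-\alpha)^2+\alpha^2Z_1\right)\sqrt{\frac{n(n-p)}{Z_1}},$$ where $Z_1$ is the first Zagreb index of $G$.
   Context: All graphs are simple and undirected. $A_{\alpha}(G)=\alpha D(G)+(1-\alpha)A(G)$, where $A(G)$ is the adjacency matrix and $D(G)$ the diagonal degree matrix. For a real symmetric matrix $M$ with eigenvalues $\lambda_1(M)\geq\cdots\geq\lambda_n(M)$, $S_k(M)=\sum_{i=1}^k\lambda_i(M)$. $\alpha_0(G)$ denotes the smallest $\alpha$ such that $A_{\alpha}(G)$ is positive semidefinite for all $\alpha_0(G)\leq\alpha\leq 1$. The positive inertia index of $A_\alpha(G)$ is its number of positive eigenvalues. $Z_1=\sum_{v\in V(G)}d_v^2$ is the first Zagreb index. *)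

theory Defs
  imports "Jordan_Normal_Form.Jordan_Normal_Form" "HOL-Library.Multiset"
begin

definition simple_graph :: "nat \<Rightarrow> (nat \<Rightarrow> nat \<Rightarrow> bool) \<Rightarrow> bool" where
  "simple_graph n E \<longleftrightarrow> (\<forall>i<n. \<forall>j<n. E i j \<longleftrightarrow> E j i) \<and> (\<forall>i<n. \<not> E i i)"

definition num_edges :: "nat \<Rightarrow> (nat \<Rightarrow> nat \<Rightarrow> bool) \<Rightarrow> nat" where
  "num_edges n E = card {(i, j). i < j \<and> j < n \<and> E i j}"

definition degree :: "nat \<Rightarrow> (nat \<Rightarrow> nat \<Rightarrow> bool) \<Rightarrow> nat \<Rightarrow> nat" where
  "degree n E i = card {j. j < n \<and> E i j}"

definition zagreb1 :: "nat \<Rightarrow> (nat \<Rightarrow> nat \<Rightarrow> bool) \<Rightarrow> nat" where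
  "zagreb1 n E = (\<Sum>i<n. (degree n E i)^2)"

definition adj_mat :: "nat \<Rightarrow> (nat \<Rightarrow> nat \<Rightarrow> bool) \<Rightarrow> real mat" where
  "adj_mat n E = mat n n (\<lambda>(i, j). if E i j then 1 else 0)"

definition deg_mat :: "nat \<Rightarrow> (nat \<Rightarrow> nat \<Rightarrow> bool) \<Rightarrow> real mat" where
  "deg_mat n E = mat n n (\<lambda>(i, j). if i = j then real (degree n E i) else 0)"

definition A_alpha :: "nat \<Rightarrow> (nat \<Rightarrow> nat \<Rightarrow> bool) \<Rightarrow> real \<Rightarrow> real mat" where
  "A_alpha n E a = a \<cdot>\<^sub>m deg_mat n E + (1 - a) \<cdot>\<^sub>m adj_mat n E"

definition eigs_desc :: "real mat \<Rightarrow> real list" where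
  "eigs_desc M = rev (sorted_list_of_multiset (proots (char_poly M)))"

definition S_k :: "nat \<Rightarrow> real mat \<Rightarrow> real" where
  "S_k k M = sum_list (take k (eigs_desc M))"

definition pos_inertia :: "real mat \<Rightarrow> nat" where
  "pos_inertia M = size (filter_mset (\<lambda>x. x > 0) (proots (char_poly M)))"

definition psd :: "real mat \<Rightarrow> bool" where
  "psd M \<longleftrightarrow> (\<forall>x \<in> carrier_vec (dim_row M). x \<bullet> (M *\<^sub>v x) \<ge> 0)"

definition alpha0 :: "nat \<Rightarrow> (nat \<Rightarrow> nat \<Rightarrow> bool) \<Rightarrow> real" where
  "alpha0 n E = Inf {a. 0 \<le> a \<and> a \<le> 1 \<and> (\<forall>b. a \<le> b \<and> b \<le> 1 \<longrightarrow> psd (A_alpha n E b))}"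

end

theory Submission
  imports Defs "Jordan_Normal_Form.Schur_Decomposition"
begin

(* Let M = A_alpha(G). It is symmetric, and entrywise nonnegative because alpha < alpha_0(G) <= 1
   (this is the only use of the hypothesis on alpha). Its eigenvalues l_1 >= ... >= l_n are real,
   tr M = 2 alpha m and tr M^2 = 2m(1-alpha)^2 + alpha^2 Z_1 =: T. With p positive eigenvalues,
   S_p = tr M + N, where N is minus the sum of the n - p non-positive ones, and Cauchy-Schwarz gives
   N^2 <= (n - p)(T - l_1^2). For a nonnegative symmetric matrix every |l_i| is at most l_1, so
   ||M x|| <= l_1 ||x||; taking x = (1,...,1) gives l_1^2 >= Z_1/n =: u. Finally T - u <= T^2/(4u)
   yields N <= (T/2) sqrt((n - p)/u). *)

lemma index_transpose_mult_mult:
  fixes U M :: "'a :: comm_semiring_0 mat"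
  assumes U: "U \<in> carrier_mat n n" and M: "M \<in> carrier_mat n n" and i: "i < n" and j: "j < n"
  shows "(transpose_mat U * M * U) $$ (i, j) = col U i \<bullet> (M *\<^sub>v col U j)"
proof -
  have "transpose_mat U * M * U = transpose_mat U * (M * U)"
    using U M by (intro assoc_mult_mat[of _ n n _ n _ n]) auto
  then show ?thesis
    using U M i j by (simp add: col_mult2[OF M U j])
qed

definition trace :: "'a :: comm_monoid_add mat \<Rightarrow> 'a" where
  "trace A = (\<Sum>i<dim_row A. A $$ (i, i))"

lemma trace_eq_sum_list_diag_mat: "trace A = sum_list (diag_mat A)"
  by (simp add: trace_def diag_mat_def sum_list_sum_nth lessThan_atLeast0)

lemma trace_mult_comm:
  fixes A B :: "'a :: comm_semiring_0 mat"
  assumes A: "A \<in> carrier_mat n m" and B: "B \<in> carrier_mat m n"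
  shows "trace (A * B) = trace (B * A)"
proof -
  have "trace (A * B) = (\<Sum>i<n. \<Sum>k<m. A $$ (i, k) * B $$ (k, i))"
    unfolding trace_def using A B by (auto intro!: sum.cong simp: scalar_prod_def lessThan_atLeast0)
  also have "\<dots> = (\<Sum>k<m. \<Sum>i<n. B $$ (k, i) * A $$ (i, k))"
    by (subst sum.swap) (simp add: mult.commute)
  also have "\<dots> = trace (B * A)"
    unfolding trace_def using A B by (auto intro!: sum.cong simp: scalar_prod_def lessThan_atLeast0)
  finally show ?thesis .
qed

lemma proots_prod_linear_factors: "proots (\<Prod>a\<leftarrow>as. [:- a, 1:]) = mset (as :: 'a :: idom list)"
proof (induction as)
  case (Cons a as)
  have "(\<Prod>a\<leftarrow>as. [:- a, 1:]) \<noteq> (0 :: 'a poly)" by (auto simp: prod_list_zero_iff)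
  then show ?case
    using proots_mult[of "[:- a, 1:]" "\<Prod>a\<leftarrow>as. [:- a, 1:]"] proots_linear_factor[of "- a"] Cons.IH
    by simp
qed simp

lemma quadratic_form_eq_sum:
  fixes M :: "'a :: comm_semiring_0 mat"
  assumes "M \<in> carrier_mat n n" and "x \<in> carrier_vec n"
  shows "x \<bullet> (M *\<^sub>v x) = (\<Sum>i<n. \<Sum>j<n. x $ i * M $$ (i, j) * x $ j)"
  using assms
  by (auto simp: scalar_prod_def lessThan_atLeast0 sum_distrib_left mult.assoc intro!: sum.cong)

lemma norm_square_eq_sum:
  fixes x :: "'a :: comm_semiring_1 vec"
  shows "x \<in> carrier_vec n \<Longrightarrow> x \<bullet> x = (\<Sum>i<n. (x $ i)\<^sup>2)"
  unfolding scalar_prod_def by (auto simp: power2_eq_square lessThan_atLeast0 intro!: sum.cong)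

lemma index_mult_diagonal_mat:
  fixes A B :: "'a :: comm_semiring_0 mat"
  assumes A: "A \<in> carrier_mat n n" "diagonal_mat A" and B: "B \<in> carrier_mat n n" "diagonal_mat B"
    and i: "i < n" and j: "j < n"
  shows "(A * B) $$ (i, j) = (if i = j then A $$ (i, i) * B $$ (i, i) else 0)"
proof -
  have "(A * B) $$ (i, j) = (\<Sum>k<n. A $$ (i, k) * B $$ (k, j))"
    using A B i j by (auto simp: scalar_prod_def lessThan_atLeast0 intro!: sum.cong)
  also have "\<dots> = (\<Sum>k<n. if k = i then A $$ (i, i) * B $$ (i, j) else 0)"
    using A B i j by (intro sum.cong refl) (auto simp: diagonal_mat_def)
  finally show ?thesis using A B i j by (auto simp: diagonal_mat_def)
qed

lemma cnj_hermitian_form_of_real_symmetric: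
  fixes M :: "real mat" and z :: "complex vec"
  assumes M: "M \<in> carrier_mat n n" and sym: "transpose_mat M = M" and z: "z \<in> carrier_vec n"
  defines "C \<equiv> map_mat complex_of_real M"
  shows "cnj ((C *\<^sub>v z) \<bullet>c z) = (C *\<^sub>v z) \<bullet>c z"
proof -
  have M_sym: "M $$ (i, j) = M $$ (j, i)" if "i < n" "j < n" for i j
    using arg_cong[OF sym, of "\<lambda>A. A $$ (i, j)"] that M by auto
  have form: "(C *\<^sub>v z) \<bullet>c z = (\<Sum>i<n. \<Sum>j<n. complex_of_real (M $$ (i, j)) * z $ j * cnj (z $ i))"
    using z M unfolding C_def scalar_prod_def
    by (auto intro!: sum.cong simp: sum_distrib_right lessThan_atLeast0 row_def scalar_prod_def)
  have "cnj ((C *\<^sub>v z) \<bullet>c z) = (\<Sum>i<n. \<Sum>j<n. complex_of_real (M $$ (i, j)) * cnj (z $ j) * z $ i)"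
    unfolding form by (simp add: cnj_sum)
  also have "\<dots> = (\<Sum>j<n. \<Sum>i<n. complex_of_real (M $$ (i, j)) * cnj (z $ j) * z $ i)"
    by (rule sum.swap)
  also have "\<dots> = (C *\<^sub>v z) \<bullet>c z"
    unfolding form by (intro sum.cong refl) (auto simp: M_sym mult.commute mult.left_commute)
  finally show ?thesis .
qed

lemma real_symmetric_has_eigenvalue:
  fixes M :: "real mat"
  assumes M: "M \<in> carrier_mat n n" and sym: "transpose_mat M = M" and n: "0 < n"
  shows "\<exists>e. eigenvalue M e"
proof -
  define C where "C = map_mat complex_of_real M"
  have C: "C \<in> carrier_mat n n" using M by (simp add: C_def)
  obtain as where cp: "char_poly C = (\<Prod>a\<leftarrow>as. [:- a, 1:])" and len: "length as = n"
    using char_poly_factorized[OF C] by blast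
  from len n obtain \<mu> where "\<mu> \<in> set as" by (cases as) auto
  then have "poly (char_poly C) \<mu> = 0" unfolding cp poly_prod_list prod_list_zero_iff by auto
  then obtain z where "eigenvector C z \<mu>"
    using eigenvalue_root_char_poly[OF C] unfolding eigenvalue_def by blast
  then have z: "z \<in> carrier_vec n" and z0: "z \<noteq> 0\<^sub>v n" and ev: "C *\<^sub>v z = \<mu> \<cdot>\<^sub>v z"
    unfolding eigenvector_def using C by auto
  have "(C *\<^sub>v z) \<bullet>c z = \<mu> * (z \<bullet>c z)" unfolding ev using z by simp
  moreover have "0 < z \<bullet>c z" using conjugate_square_greater_0_vec[OF z] z0 by simp
  then have "cnj (z \<bullet>c z) = z \<bullet>c z" and "z \<bullet>c z \<noteq> 0"
    by (auto simp: less_complex_def complex_eq_iff)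
  ultimately have "cnj \<mu> = \<mu>"
    using cnj_hermitian_form_of_real_symmetric[OF M sym z, folded C_def]
    by (metis complex_cnj_mult mult_right_cancel)
  then have \<mu>: "\<mu> = complex_of_real (Re \<mu>)" by (simp add: complex_eq_iff)
  have "complex_of_real (poly (char_poly M) (Re \<mu>)) = poly (char_poly C) (complex_of_real (Re \<mu>))"
    unfolding C_def of_real_hom.char_poly_hom[OF M] by (simp add: of_real_hom.poly_map_poly)
  also have "\<dots> = 0" using \<mu> \<open>poly (char_poly C) \<mu> = 0\<close> by simp
  finally have "poly (char_poly M) (Re \<mu>) = 0" by simp
  then show ?thesis using eigenvalue_root_char_poly[OF M] by blast
qed

lemma real_symmetric_has_unit_eigenvector:
  fixes M :: "real mat"
  assumes M: "M \<in> carrier_mat n n" and sym: "transpose_mat M = M" and n: "0 < n"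
  obtains e w where "w \<in> carrier_vec n" and "w \<bullet> w = 1" and "M *\<^sub>v w = e \<cdot>\<^sub>v w"
proof -
  obtain e v where "eigenvector M v e"
    using real_symmetric_has_eigenvalue[OF M sym n] unfolding eigenvalue_def by blast
  then have v: "v \<in> carrier_vec n" and "v \<noteq> 0\<^sub>v n" and ev: "M *\<^sub>v v = e \<cdot>\<^sub>v v"
    unfolding eigenvector_def using M by auto
  then have "0 < v \<bullet> v" using conjugate_square_greater_0_vec[OF v] by simp
  define w where "w = (1 / sqrt (v \<bullet> v)) \<cdot>\<^sub>v v"
  have "w \<in> carrier_vec n" and "w \<bullet> w = 1"
    using v \<open>0 < v \<bullet> v\<close> by (auto simp: w_def real_sqrt_mult[symmetric])
  moreover have "M *\<^sub>v w = e \<cdot>\<^sub>v w"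
    unfolding w_def using M v ev by (simp add: mult_mat_vec smult_smult_assoc mult.commute)
  ultimately show ?thesis by (rule that)
qed

lemma exists_orthogonal_mat_first_col:
  fixes w :: "real vec"
  assumes w: "w \<in> carrier_vec n" and w1: "w \<bullet> w = 1"
  shows "\<exists>U \<in> carrier_mat n n. transpose_mat U * U = 1\<^sub>m n \<and> col U 0 = w"
proof -
  interpret cof_vec_space n "TYPE(real)" .
  have w0: "w \<noteq> 0\<^sub>v n" using w1 w by auto
  have n: "0 < n" using w0 w by (cases n) auto
  define b where "b = basis_completion w"
  note b = basis_completion[OF w w0, folded b_def]
  define ws where "ws = gram_schmidt n b"
  note gs = gram_schmidt_result[OF b(2) b(4) b(5) ws_def]
  have len: "length ws = n" using gs b by simp
  obtain bs where "b = w # bs" using b(6,7) n by (cases b) auto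
  then have "hd ws = w" using gram_schmidt_hd[OF w, of bs] ws_def by simp
  then have ws0: "ws ! 0 = w" using len n by (cases ws) auto
  have ws: "ws ! i \<in> carrier_vec n" if "i < n" for i using gs(3) len that by auto
  have orth: "ws ! i \<bullet> ws ! j = 0 \<longleftrightarrow> i \<noteq> j" if "i < n" "j < n" for i j
    using corthogonalD[OF gs(2), of i j] len that by simp
  have pos: "0 < ws ! i \<bullet> ws ! i" if "i < n" for i
    using orth[OF that that] conjugate_square_ge_0_vec[of "ws ! i"] by simp
  define us where "us = map (\<lambda>v. (1 / sqrt (v \<bullet> v)) \<cdot>\<^sub>v v) ws"
  have us: "us ! i \<in> carrier_vec n" if "i < n" for i
    using ws[OF that] that len by (simp add: us_def)
  have orthonormal: "us ! i \<bullet> us ! j = (if i = j then 1 else 0)" if "i < n" "j < n" for i j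
  proof -
    have "us ! i \<bullet> us ! j
        = 1 / sqrt (ws ! i \<bullet> ws ! i) * (1 / sqrt (ws ! j \<bullet> ws ! j)) * (ws ! i \<bullet> ws ! j)"
      using that len ws[OF that(1)] ws[OF that(2)] by (simp add: us_def)
    then show ?thesis using orth[OF that] pos[OF that(1)] by (auto simp: real_sqrt_mult[symmetric])
  qed
  define U where "U = mat_of_cols n us"
  have U: "U \<in> carrier_mat n n"
    using mat_of_cols_carrier(1)[of n us] len by (simp add: U_def us_def)
  have col: "col U j = us ! j" if "j < n" for j
    using that len us[OF that] by (simp add: U_def us_def)
  have "transpose_mat U * U = 1\<^sub>m n" by (rule eq_matI) (use U in \<open>auto simp: col orthonormal\<close>)
  moreover have "col U 0 = w" using col[OF n] ws0 w1 len n by (simp add: us_def)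
  ultimately show ?thesis using U by blast
qed

lemma symmetric_deflation:
  fixes M U :: "real mat"
  assumes M: "M \<in> carrier_mat (Suc k) (Suc k)" and sym: "transpose_mat M = M"
    and U: "U \<in> carrier_mat (Suc k) (Suc k)" and orth: "transpose_mat U * U = 1\<^sub>m (Suc k)"
    and ev: "M *\<^sub>v col U 0 = e \<cdot>\<^sub>v col U 0"
  shows "\<exists>C \<in> carrier_mat k k. transpose_mat C = C \<and>
    transpose_mat U * M * U = four_block_mat (mat 1 1 (\<lambda>_. e)) (0\<^sub>m 1 k) (0\<^sub>m k 1) C"
proof -
  let ?n = "Suc k"
  define A where "A = transpose_mat U * M * U"
  have A: "A \<in> carrier_mat ?n ?n" using U M by (simp add: A_def)
  have A_sym: "A $$ (i, j) = A $$ (j, i)" if "i < ?n" "j < ?n" for i j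
  proof -
    have "transpose_mat A = A" unfolding A_def using U M sym
      by (simp add: transpose_mult[of _ ?n ?n _ ?n] assoc_mult_mat[of _ ?n ?n _ ?n _ ?n])
    then show ?thesis
      using arg_cong[of _ _ "\<lambda>B. B $$ (i, j)"] that A by (metis carrier_matD index_transpose_mat(1))
  qed
  have A_col0: "A $$ (i, 0) = (if i = 0 then e else 0)" if "i < Suc k" for i
  proof -
    have "A $$ (i, 0) = e * (col U i \<bullet> col U 0)"
      unfolding A_def index_transpose_mult_mult[OF U M that zero_less_Suc] ev using U that by simp
    also have "col U i \<bullet> col U 0 = (transpose_mat U * U) $$ (i, 0)" using U that by simp
    finally show ?thesis using orth that by simp
  qed
  define C where "C = mat k k (\<lambda>(i, j). A $$ (Suc i, Suc j))"
  have "transpose_mat C = C" by (rule eq_matI) (auto simp: C_def A_sym)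
  moreover have "A = four_block_mat (mat 1 1 (\<lambda>_. e)) (0\<^sub>m 1 k) (0\<^sub>m k 1) C"
  proof (rule eq_matI)
    fix i j assume "i < dim_row (four_block_mat (mat 1 1 (\<lambda>_. e)) (0\<^sub>m 1 k) (0\<^sub>m k 1) C)"
      and "j < dim_col (four_block_mat (mat 1 1 (\<lambda>_. e)) (0\<^sub>m 1 k) (0\<^sub>m k 1) C)"
    then have i: "i < Suc k" and j: "j < Suc k" by (auto simp: C_def)
    show "A $$ (i, j) = four_block_mat (mat 1 1 (\<lambda>_. e)) (0\<^sub>m 1 k) (0\<^sub>m k 1) C $$ (i, j)"
    proof (cases "i = 0 \<or> j = 0")
      case True
      then show ?thesis using A_col0[OF i] A_col0[OF j] A_sym[OF i j] i j by (auto simp: C_def)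
    next
      case False
      then obtain i' j' where "i = Suc i'" "j = Suc j'" by (cases i; cases j) auto
      then show ?thesis using i j by (simp add: C_def)
    qed
  qed (use A in \<open>auto simp: C_def\<close>)
  ultimately show ?thesis unfolding A_def by (auto simp: C_def)
qed

theorem real_symmetric_orthogonally_diagonalizable:
  fixes M :: "real mat"
  assumes "M \<in> carrier_mat n n" and "transpose_mat M = M"
  shows "\<exists>U \<in> carrier_mat n n. transpose_mat U * U = 1\<^sub>m n \<and> diagonal_mat (transpose_mat U * M * U)"
  using assms
proof (induction n arbitrary: M)
  case 0
  show ?case by (intro bexI[of _ "1\<^sub>m 0"]) (auto simp: diagonal_mat_def)
next
  case (Suc k)
  let ?n = "Suc k"
  note M = Suc.prems(1) and sym = Suc.prems(2)
  obtain e w where w: "w \<in> carrier_vec ?n" and w1: "w \<bullet> w = 1" and ev_w: "M *\<^sub>v w = e \<cdot>\<^sub>v w"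
    using real_symmetric_has_unit_eigenvector[OF M sym] by blast
  obtain U where U: "U \<in> carrier_mat ?n ?n" and orth_U: "transpose_mat U * U = 1\<^sub>m ?n"
    and "col U 0 = w" using exists_orthogonal_mat_first_col[OF w w1] by blast
  with ev_w have "M *\<^sub>v col U 0 = e \<cdot>\<^sub>v col U 0" by simp
  then obtain C where C: "C \<in> carrier_mat k k" and "transpose_mat C = C"
    and block: "transpose_mat U * M * U = four_block_mat (mat 1 1 (\<lambda>_. e)) (0\<^sub>m 1 k) (0\<^sub>m k 1) C"
    using symmetric_deflation[OF M sym U orth_U] by blast
  then obtain V where V: "V \<in> carrier_mat k k" and orth_V: "transpose_mat V * V = 1\<^sub>m k"
    and diag_V: "diagonal_mat (transpose_mat V * C * V)" using Suc.IH by blast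
  define B where "B = four_block_mat (1\<^sub>m 1) (0\<^sub>m 1 k) (0\<^sub>m k 1) V"
  have B: "B \<in> carrier_mat ?n ?n"
    using four_block_carrier_mat[of "1\<^sub>m 1" 1 1 V k k] V by (simp add: B_def)
  note block_simps =
    transpose_four_block_mat[of _ 1 1 _ k _ k] mult_four_block_mat[of _ 1 1 _ k _ k _ _ 1 _ k]
  have "transpose_mat (U * B) * (U * B) = transpose_mat B * (transpose_mat U * U) * B"
    using U B by (simp add: transpose_mult[of _ ?n ?n _ ?n] assoc_mult_mat[of _ ?n ?n _ ?n _ ?n])
  also have "\<dots> = 1\<^sub>m ?n"
    unfolding orth_U B_def using B V orth_V by (simp add: block_simps)
  finally have orth_UB: "transpose_mat (U * B) * (U * B) = 1\<^sub>m ?n" .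
  have "transpose_mat (U * B) * M * (U * B) = transpose_mat B * (transpose_mat U * M * U) * B"
    using U B M by (simp add: transpose_mult[of _ ?n ?n _ ?n] assoc_mult_mat[of _ ?n ?n _ ?n _ ?n])
  also have "\<dots> = four_block_mat (mat 1 1 (\<lambda>_. e)) (0\<^sub>m 1 k) (0\<^sub>m k 1) (transpose_mat V * C * V)"
    unfolding block B_def using V C by (simp add: block_simps)
  finally have "diagonal_mat (transpose_mat (U * B) * M * (U * B))"
    using diag_V V C unfolding diagonal_mat_def by auto
  moreover have "U * B \<in> carrier_mat ?n ?n" using U B by simp
  ultimately show ?case using orth_UB by blast
qed

lemma abs_quadratic_form_le:
  fixes M :: "real mat"
  assumes M: "M \<in> carrier_mat n n" and nonneg: "\<And>i j. i < n \<Longrightarrow> j < n \<Longrightarrow> 0 \<le> M $$ (i, j)"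
    and x: "x \<in> carrier_vec n"
  shows "\<bar>x \<bullet> (M *\<^sub>v x)\<bar> \<le> map_vec abs x \<bullet> (M *\<^sub>v map_vec abs x)"
proof -
  have "\<bar>x \<bullet> (M *\<^sub>v x)\<bar> \<le> (\<Sum>i<n. \<Sum>j<n. \<bar>x $ i * M $$ (i, j) * x $ j\<bar>)"
    unfolding quadratic_form_eq_sum[OF M x] by (intro order.trans[OF sum_abs] sum_mono sum_abs)
  also have "\<dots> = map_vec abs x \<bullet> (M *\<^sub>v map_vec abs x)"
    using x nonneg by (simp add: quadratic_form_eq_sum[OF M] abs_mult)
  finally show ?thesis .
qed

locale orthogonal_diagonalization =
  fixes n :: nat and M U D :: "real mat"
  assumes U: "U \<in> carrier_mat n n" and orthogonal: "transpose_mat U * U = 1\<^sub>m n"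
    and D: "D \<in> carrier_mat n n" and diagonal: "diagonal_mat D"
    and decomposition: "M = U * D * transpose_mat U"
begin

lemma orthogonal': "U * transpose_mat U = 1\<^sub>m n"
  using mat_mult_left_right_inverse[of "transpose_mat U" n U] U orthogonal by simp

lemma carrier: "M \<in> carrier_mat n n"
  using U D by (simp add: decomposition)

lemma symmetric: "transpose_mat M = M"
proof -
  have "transpose_mat D = D"
    using diagonal D by (intro eq_matI) (auto simp: diagonal_mat_def, metis)
  then show ?thesis using U D
    by (simp add: decomposition transpose_mult[of _ n n _ n] assoc_mult_mat[of _ n n _ n _ n])
qed

lemma proots_char_poly: "proots (char_poly M) = mset (diag_mat D)"
proof -
  have "similar_mat M D"
    unfolding similar_mat_def similar_mat_wit_def using U D orthogonal orthogonal'
    by (intro exI[of _ U] exI[of _ "transpose_mat U"]) (auto simp: decomposition Let_def)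
  then have "char_poly M = char_poly D" by (rule char_poly_similar)
  also have "\<dots> = (\<Prod>a\<leftarrow>diag_mat D. [:- a, 1:])"
    using char_poly_upper_triangular[OF D] diagonal D
    by (auto simp: diagonal_mat_def upper_triangular_def)
  also have "proots \<dots> = mset (diag_mat D)"
    by (rule proots_prod_linear_factors)
  finally show ?thesis .
qed

lemma trace_eq: "trace M = sum_list (diag_mat D)"
proof -
  have "trace M = trace (transpose_mat U * (U * D))"
    unfolding decomposition using U D by (intro trace_mult_comm[of _ n n]) auto
  also have "transpose_mat U * (U * D) = D"
    using U D orthogonal by (simp add: assoc_mult_mat[of _ n n _ n _ n, symmetric])
  finally show ?thesis by (simp add: trace_eq_sum_list_diag_mat)
qed

lemma norm_transpose_mult:
  "x \<in> carrier_vec n \<Longrightarrow> (transpose_mat U *\<^sub>v x) \<bullet> (transpose_mat U *\<^sub>v x) = x \<bullet> x"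
  using transpose_vec_mult_scalar[OF U, of "transpose_mat U *\<^sub>v x" x] U orthogonal'
  by (simp add: assoc_mult_mat_vec[of _ n n _ n, symmetric])

lemma quadratic_form:
  assumes x: "x \<in> carrier_vec n"
  shows "x \<bullet> (M *\<^sub>v x) = (\<Sum>i<n. D $$ (i, i) * ((transpose_mat U *\<^sub>v x) $ i)\<^sup>2)"
proof -
  define y where "y = transpose_mat U *\<^sub>v x"
  have y: "y \<in> carrier_vec n" using U x by (simp add: y_def)
  have "x \<bullet> (M *\<^sub>v x) = x \<bullet> (U *\<^sub>v (D *\<^sub>v y))"
    using U D x by (simp add: decomposition y_def assoc_mult_mat_vec[of _ n n _ n])
  also have "\<dots> = y \<bullet> (D *\<^sub>v y)"
    using transpose_vec_mult_scalar[OF U, of "D *\<^sub>v y" x] U D y x by (simp add: y_def)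
  also have "\<dots> = (\<Sum>i<n. D $$ (i, i) * (y $ i)\<^sup>2)"
    unfolding quadratic_form_eq_sum[OF D y]
  proof (intro sum.cong refl)
    fix i assume i: "i \<in> {..<n}"
    have "(\<Sum>j<n. y $ i * D $$ (i, j) * y $ j) = y $ i * D $$ (i, i) * y $ i"
      by (subst sum.remove[of _ i]) (use i diagonal D in \<open>auto simp: diagonal_mat_def\<close>)
    then show "(\<Sum>j<n. y $ i * D $$ (i, j) * y $ j) = D $$ (i, i) * (y $ i)\<^sup>2"
      by (simp add: power2_eq_square)
  qed
  finally show ?thesis unfolding y_def .
qed

lemma quadratic_form_le:
  assumes c: "\<forall>\<mu> \<in> set (diag_mat D). \<mu> \<le> c" and x: "x \<in> carrier_vec n"
  shows "x \<bullet> (M *\<^sub>v x) \<le> c * (x \<bullet> x)"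
proof -
  have y: "transpose_mat U *\<^sub>v x \<in> carrier_vec n" using U x by simp
  have "x \<bullet> (M *\<^sub>v x) \<le> (\<Sum>i<n. c * ((transpose_mat U *\<^sub>v x) $ i)\<^sup>2)"
    unfolding quadratic_form[OF x] using c D
    by (intro sum_mono mult_right_mono) (auto simp: diag_mat_def)
  also have "\<dots> = c * (x \<bullet> x)"
    unfolding sum_distrib_left[symmetric] norm_square_eq_sum[OF y, symmetric]
    by (rule arg_cong[OF norm_transpose_mult[OF x]])
  finally show ?thesis .
qed

lemma eigenvalue_as_quadratic_form:
  assumes "\<mu> \<in> set (diag_mat D)"
  shows "\<exists>w \<in> carrier_vec n. w \<bullet> w = 1 \<and> w \<bullet> (M *\<^sub>v w) = \<mu>"
proof -
  from assms D obtain i where i: "i < n" and \<mu>: "\<mu> = D $$ (i, i)" by (auto simp: diag_mat_def)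
  have w: "col U i \<in> carrier_vec n" using U i by simp
  have unit: "transpose_mat U *\<^sub>v col U i = unit_vec n i"
  proof (rule eq_vecI)
    fix j assume "j < dim_vec (unit_vec n i)"
    then have "(transpose_mat U *\<^sub>v col U i) $ j = (transpose_mat U * U) $$ (j, i)"
      using U i by simp
    then show "(transpose_mat U *\<^sub>v col U i) $ j = unit_vec n i $ j"
      using orthogonal i \<open>j < dim_vec (unit_vec n i)\<close> by simp
  qed (use U in simp)
  have "col U i \<bullet> col U i = 1" using norm_transpose_mult[OF w] unit i by simp
  moreover have "col U i \<bullet> (M *\<^sub>v col U i) = \<mu>"
    unfolding quadratic_form[OF w] unit \<mu> by (subst sum.remove[of _ i]) (use i in auto)
  ultimately show ?thesis using w by blast
qed

lemma square: "orthogonal_diagonalization n (M * M) U (D * D)"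
proof
  show "diagonal_mat (D * D)"
    using index_mult_diagonal_mat[OF D diagonal D diagonal] D by (simp add: diagonal_mat_def)
  show "M * M = U * (D * D) * transpose_mat U"
  proof -
    have "M * M = U * D * (transpose_mat U * U) * D * transpose_mat U"
      unfolding decomposition using U D by (simp add: assoc_mult_mat[of _ n n _ n _ n])
    then show ?thesis using U D orthogonal by (simp add: assoc_mult_mat[of _ n n _ n _ n])
  qed
qed (use U D orthogonal in auto)

lemma diag_mat_square: "diag_mat (D * D) = map (\<lambda>x. x\<^sup>2) (diag_mat D)"
  using index_mult_diagonal_mat[OF D diagonal D diagonal] D
  by (auto simp: diag_mat_def power2_eq_square)

lemma trace_square: "trace (M * M) = sum_list (map (\<lambda>x. x\<^sup>2) (diag_mat D))"
  using orthogonal_diagonalization.trace_eq[OF square] by (simp add: diag_mat_square)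

lemma norm_mult_le:
  assumes c: "\<forall>\<mu> \<in> set (diag_mat D). \<mu>\<^sup>2 \<le> c" and x: "x \<in> carrier_vec n"
  shows "(M *\<^sub>v x) \<bullet> (M *\<^sub>v x) \<le> c * (x \<bullet> x)"
proof -
  have "(M *\<^sub>v x) \<bullet> (M *\<^sub>v x) = x \<bullet> ((M * M) *\<^sub>v x)"
    using transpose_vec_mult_scalar[OF carrier, of "M *\<^sub>v x" x] carrier x symmetric
    by (simp add: assoc_mult_mat_vec[of _ n n _ n])
  also have "\<dots> \<le> c * (x \<bullet> x)"
    using orthogonal_diagonalization.quadratic_form_le[OF square _ x] c
    by (simp add: diag_mat_square)
  finally show ?thesis .
qed

lemma abs_eigenvalue_le_Max:
  assumes nonneg: "\<And>i j. i < n \<Longrightarrow> j < n \<Longrightarrow> 0 \<le> M $$ (i, j)" and \<mu>: "\<mu> \<in> set (diag_mat D)"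
  shows "\<bar>\<mu>\<bar> \<le> Max (set (diag_mat D))"
proof -
  obtain w where w: "w \<in> carrier_vec n" and w1: "w \<bullet> w = 1" and "w \<bullet> (M *\<^sub>v w) = \<mu>"
    using eigenvalue_as_quadratic_form[OF \<mu>] by blast
  then have "\<bar>\<mu>\<bar> \<le> map_vec abs w \<bullet> (M *\<^sub>v map_vec abs w)"
    using abs_quadratic_form_le[OF carrier nonneg w] by simp
  also have "\<dots> \<le> Max (set (diag_mat D)) * (map_vec abs w \<bullet> map_vec abs w)"
    by (rule quadratic_form_le) (use w in auto)
  also have "map_vec abs w \<bullet> map_vec abs w = 1"
    using w w1 by (simp add: norm_square_eq_sum[of _ n])
  finally show ?thesis by simp
qed

lemma norm_mult_le_Max_eigenvalue:
  assumes nonneg: "\<And>i j. i < n \<Longrightarrow> j < n \<Longrightarrow> 0 \<le> M $$ (i, j)" and x: "x \<in> carrier_vec n"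
  shows "(M *\<^sub>v x) \<bullet> (M *\<^sub>v x) \<le> (Max (set (diag_mat D)))\<^sup>2 * (x \<bullet> x)"
proof (rule norm_mult_le[OF _ x], intro ballI)
  fix \<mu> assume "\<mu> \<in> set (diag_mat D)"
  then show "\<mu>\<^sup>2 \<le> (Max (set (diag_mat D)))\<^sup>2"
    using abs_eigenvalue_le_Max[OF nonneg] by (metis abs_ge_zero power2_abs power_mono)
qed

end

lemma real_symmetric_orthogonal_diagonalization:
  fixes M :: "real mat"
  assumes M: "M \<in> carrier_mat n n" and sym: "transpose_mat M = M"
  obtains U D where "orthogonal_diagonalization n M U D"
proof -
  obtain U where U: "U \<in> carrier_mat n n" and orth: "transpose_mat U * U = 1\<^sub>m n"
    and diag: "diagonal_mat (transpose_mat U * M * U)"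
    using real_symmetric_orthogonally_diagonalizable[OF M sym] by blast
  have "U * transpose_mat U = 1\<^sub>m n"
    using mat_mult_left_right_inverse[of "transpose_mat U" n U] U orth by simp
  moreover have "U * (transpose_mat U * M * U) * transpose_mat U
      = (U * transpose_mat U) * M * (U * transpose_mat U)"
    using U M by (simp add: assoc_mult_mat[of _ n n _ n _ n])
  ultimately have "M = U * (transpose_mat U * M * U) * transpose_mat U"
    using M by simp
  then show ?thesis
    using U orth diag M by (intro that) (unfold_locales, auto)
qed

lemma square_sum_list_le:
  fixes xs :: "real list"
  shows "(sum_list xs)\<^sup>2 \<le> real (length xs) * sum_list (map (\<lambda>x. x\<^sup>2) xs)"
proof -
  define k S Q where "k = real (length xs)" and "S = sum_list xs"
    and "Q = sum_list (map (\<lambda>x. x\<^sup>2) xs)"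
  have "0 \<le> sum_list (map (\<lambda>x. (k * x - S)\<^sup>2) xs)" by (rule sum_list_nonneg) auto
  also have "\<dots> = sum_list (map (\<lambda>x. k\<^sup>2 * x\<^sup>2 - 2 * k * S * x + S\<^sup>2) xs)"
    by (simp add: power2_diff power_mult_distrib algebra_simps)
  also have "\<dots> = k\<^sup>2 * Q - 2 * k * S * S + k * S\<^sup>2"
    by (simp add: k_def S_def Q_def sum_list_addf sum_list_subtractf sum_list_const_mult
        sum_list_triv)
  finally have "k * S\<^sup>2 \<le> k * (k * Q)" by (simp add: power2_eq_square algebra_simps)
  show ?thesis
  proof (cases "xs = []")
    case False
    then have "0 < k" by (simp add: k_def)
    with \<open>k * S\<^sup>2 \<le> k * (k * Q)\<close> have "S\<^sup>2 \<le> k * Q" by (simp add: mult_le_cancel_left_pos)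
    then show ?thesis by (simp add: k_def S_def Q_def)
  qed simp
qed

lemma sum_list_filter_pos_le:
  fixes xs :: "real list"
  assumes l: "l \<in> set xs" "0 < l" and u: "0 < u" "u \<le> l\<^sup>2"
  shows "sum_list (filter ((<) 0) xs)
    \<le> sum_list xs + sum_list (map (\<lambda>x. x\<^sup>2) xs) / 2 * sqrt (length (filter (\<lambda>x. \<not> 0 < x) xs) / u)"
proof -
  define ps ns where "ps = filter ((<) 0) xs" and "ns = filter (\<lambda>x. \<not> 0 < x) xs"
  define T k where "T = sum_list (map (\<lambda>x. x\<^sup>2) xs)" and "k = real (length ns)"
  define N where "N = - sum_list ns"
  have N: "sum_list ps = sum_list xs + N"
    unfolding ps_def ns_def N_def by (induction xs) auto
  have T: "T = sum_list (map (\<lambda>x. x\<^sup>2) ps) + sum_list (map (\<lambda>x. x\<^sup>2) ns)"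
    unfolding T_def ps_def ns_def by (induction xs) auto
  have "0 \<le> N" unfolding N_def ns_def by (induction xs) auto
  have "l\<^sup>2 \<le> sum_list (map (\<lambda>x. x\<^sup>2) ps)"
    using l by (intro member_le_sum_list) (auto simp: ps_def)
  then have ns_squares: "sum_list (map (\<lambda>x. x\<^sup>2) ns) \<le> T - u" using T u by simp
  have "N\<^sup>2 \<le> k * sum_list (map (\<lambda>x. x\<^sup>2) ns)"
    using square_sum_list_le[of ns] by (simp add: N_def k_def)
  also have "\<dots> \<le> k * (T - u)" using ns_squares by (intro mult_left_mono) (auto simp: k_def)
  also have "\<dots> \<le> k * (T\<^sup>2 / (4 * u))"
  proof (intro mult_left_mono)
    have "4 * u * (T - u) \<le> T\<^sup>2"
      using zero_le_power2[of "T - 2 * u"] by (simp add: power2_eq_square algebra_simps)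
    then show "T - u \<le> T\<^sup>2 / (4 * u)" using u by (simp add: field_simps)
  qed (simp add: k_def)
  also have "\<dots> = (T / 2 * sqrt (k / u))\<^sup>2"
    using u by (simp add: power_mult_distrib k_def power2_eq_square field_simps)
  finally have "N\<^sup>2 \<le> (T / 2 * sqrt (k / u))\<^sup>2" .
  moreover have "0 \<le> T" unfolding T_def by (induction xs) auto
  then have "0 \<le> T / 2 * sqrt (k / u)" using u by (simp add: k_def)
  ultimately have "N \<le> T / 2 * sqrt (k / u)" using \<open>0 \<le> N\<close> by (meson power2_le_imp_le)
  then show ?thesis using N by (simp add: ps_def ns_def T_def k_def)
qed

lemma take_length_filter_pos_sorted:
  fixes xs :: "'a :: {linorder, zero} list"
  assumes "sorted_wrt (\<ge>) xs"
  shows "take (length (filter ((<) 0) xs)) xs = filter ((<) 0) xs"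
  using assms
proof (induction xs)
  case (Cons x xs)
  show ?case
  proof (cases "0 < x")
    case False
    then have "filter ((<) 0) xs = []" using Cons.prems by (auto simp: filter_empty_conv)
    then show ?thesis using False by simp
  qed (use Cons in simp)
qed simp

lemma pos_inertia_eq:
  assumes "proots (char_poly M) = mset xs"
  shows "pos_inertia M = length (filter ((<) 0) xs)"
  unfolding pos_inertia_def assms by (metis mset_filter size_mset)

lemma S_k_pos_inertia_eq:
  assumes roots: "proots (char_poly M) = mset xs"
  shows "S_k (pos_inertia M) M = sum_list (filter ((<) 0) xs)"
proof -
  define ys where "ys = rev (sort xs)"
  have ys: "mset ys = mset xs" and "sorted_wrt (\<ge>) ys" by (simp_all add: ys_def sorted_wrt_rev)
  have "eigs_desc M = ys" by (simp add: eigs_desc_def roots ys_def)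
  moreover have "pos_inertia M = length (filter ((<) 0) ys)"
    using pos_inertia_eq[OF roots] ys by (metis mset_filter size_mset)
  ultimately have "S_k (pos_inertia M) M = sum_list (filter ((<) 0) ys)"
    using take_length_filter_pos_sorted[OF \<open>sorted_wrt (\<ge>) ys\<close>] by (simp add: S_k_def)
  also have "\<dots> = sum_list (filter ((<) 0) xs)"
    using ys by (metis mset_filter sum_mset_sum_list)
  finally show ?thesis .
qed

lemma S_k_eq_0_if_trace_square_eq_0:
  fixes M :: "real mat"
  assumes M: "M \<in> carrier_mat n n" and sym: "transpose_mat M = M" and "trace (M * M) = 0"
  shows "S_k k M = 0"
proof -
  obtain U D where "orthogonal_diagonalization n M U D"
    using real_symmetric_orthogonal_diagonalization[OF M sym] by blast
  then interpret orthogonal_diagonalization n M U D .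
  have "\<forall>\<mu> \<in> set (diag_mat D). \<mu> = 0"
    using \<open>trace (M * M) = 0\<close> unfolding trace_square by (subst (asm) sum_list_nonneg_eq_0_iff) auto
  moreover have "set (eigs_desc M) = set (diag_mat D)" by (simp add: eigs_desc_def proots_char_poly)
  ultimately have "\<forall>\<mu> \<in> set (take k (eigs_desc M)). \<mu> = 0" by (blast dest: in_set_takeD)
  then show ?thesis unfolding S_k_def by (subst sum_list_nonneg_eq_0_iff) auto
qed

theorem S_k_pos_inertia_le:
  fixes M :: "real mat"
  assumes M: "M \<in> carrier_mat n n" and sym: "transpose_mat M = M"
    and nonneg: "\<And>i j. i < n \<Longrightarrow> j < n \<Longrightarrow> 0 \<le> M $$ (i, j)"
    and x: "x \<in> carrier_vec n" and Mx: "0 < (M *\<^sub>v x) \<bullet> (M *\<^sub>v x)"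
  shows "S_k (pos_inertia M) M \<le> trace M + trace (M * M) / 2
    * sqrt ((real n - real (pos_inertia M)) * (x \<bullet> x) / ((M *\<^sub>v x) \<bullet> (M *\<^sub>v x)))"
proof -
  obtain U D where "orthogonal_diagonalization n M U D"
    using real_symmetric_orthogonal_diagonalization[OF M sym] by blast
  then interpret orthogonal_diagonalization n M U D .
  define ls l where "ls = diag_mat D" and "l = Max (set ls)"
  have bound: "(M *\<^sub>v x) \<bullet> (M *\<^sub>v x) \<le> l\<^sup>2 * (x \<bullet> x)"
    unfolding l_def ls_def by (rule norm_mult_le_Max_eigenvalue[OF nonneg x])
  have "0 \<le> x \<bullet> x" using x by (simp add: norm_square_eq_sum[of _ n] sum_nonneg)
  with bound Mx have "0 < x \<bullet> x" and "l \<noteq> 0" by (auto simp: order_le_less)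
  then have "ls \<noteq> []"
    using x D by (cases n) (auto simp: ls_def diag_mat_def norm_square_eq_sum[of _ n])
  then have l: "l \<in> set ls" by (simp add: l_def)
  with \<open>l \<noteq> 0\<close> have "0 < l" using abs_eigenvalue_le_Max[OF nonneg] by (fastforce simp: ls_def l_def)
  have "(M *\<^sub>v x) \<bullet> (M *\<^sub>v x) / (x \<bullet> x) \<le> l\<^sup>2" using bound \<open>0 < x \<bullet> x\<close> by (simp add: field_simps)
  with l \<open>0 < l\<close> have "sum_list (filter ((<) 0) ls) \<le> sum_list ls + sum_list (map (\<lambda>x. x\<^sup>2) ls) / 2
      * sqrt (length (filter (\<lambda>x. \<not> 0 < x) ls) / ((M *\<^sub>v x) \<bullet> (M *\<^sub>v x) / (x \<bullet> x)))"
    using Mx \<open>0 < x \<bullet> x\<close> by (intro sum_list_filter_pos_le) auto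
  moreover have "real (length (filter (\<lambda>x. \<not> 0 < x) ls)) = real n - real (pos_inertia M)"
    using sum_length_filter_compl[of "(<) 0" ls] D
    by (simp add: pos_inertia_eq[OF proots_char_poly] ls_def diag_mat_def)
  ultimately show ?thesis
    by (simp add: S_k_pos_inertia_eq[OF proots_char_poly] trace_eq trace_square ls_def mult.commute)
qed

lemma A_alpha_carrier: "A_alpha n E a \<in> carrier_mat n n"
  by (simp add: A_alpha_def deg_mat_def adj_mat_def)

lemma index_A_alpha:
  "i < n \<Longrightarrow> j < n \<Longrightarrow> A_alpha n E a $$ (i, j) =
    (if i = j then a * real (degree n E i) else 0) + (1 - a) * (if E i j then 1 else 0)"
  by (simp add: A_alpha_def deg_mat_def adj_mat_def)

lemma A_alpha_nonneg: "0 \<le> a \<Longrightarrow> a \<le> 1 \<Longrightarrow> i < n \<Longrightarrow> j < n \<Longrightarrow> 0 \<le> A_alpha n E a $$ (i, j)"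
  by (simp add: index_A_alpha)

lemma degree_eq_sum: "real (degree n E i) = (\<Sum>j<n. if E i j then 1 else 0)"
proof -
  have "{j. j < n \<and> E i j} = {j \<in> {..<n}. E i j}" by auto
  then show ?thesis by (simp add: degree_def sum.inter_filter[symmetric])
qed

lemma psd_A_alpha_1: "psd (A_alpha n E 1)"
  unfolding psd_def
proof
  fix x :: "real vec" assume "x \<in> carrier_vec (dim_row (A_alpha n E 1))"
  then have x: "x \<in> carrier_vec n" using A_alpha_carrier[of n E 1] by simp
  have "x \<bullet> (A_alpha n E 1 *\<^sub>v x)
      = (\<Sum>i<n. \<Sum>j<n. if i = j then real (degree n E i) * (x $ i)\<^sup>2 else 0)"
    unfolding quadratic_form_eq_sum[OF A_alpha_carrier x]
    by (intro sum.cong refl) (auto simp: index_A_alpha power2_eq_square)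
  also have "\<dots> = (\<Sum>i<n. real (degree n E i) * (x $ i)\<^sup>2)" by simp
  also have "\<dots> \<ge> 0" by (intro sum_nonneg) auto
  finally show "0 \<le> x \<bullet> (A_alpha n E 1 *\<^sub>v x)" .
qed

lemma alpha0_le_1: "alpha0 n E \<le> 1"
  unfolding alpha0_def by (rule cInf_lower) (auto simp: psd_A_alpha_1 bdd_below_def)

lemma A_alpha_mult_ones: "A_alpha n E a *\<^sub>v vec n (\<lambda>_. 1) = vec n (\<lambda>i. real (degree n E i))"
proof (rule eq_vecI)
  fix i assume "i < dim_vec (vec n (\<lambda>i. real (degree n E i)))"
  then have i: "i < n" by simp
  have "(A_alpha n E a *\<^sub>v vec n (\<lambda>_. 1)) $ i = (\<Sum>j<n. A_alpha n E a $$ (i, j))"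
    using i A_alpha_carrier[of n E a]
    by (auto simp: scalar_prod_def lessThan_atLeast0 intro!: sum.cong)
  also have "\<dots> = (\<Sum>j<n. if i = j then a * real (degree n E i) else 0)
      + (1 - a) * (\<Sum>j<n. if E i j then 1 else 0)"
    using i by (simp add: index_A_alpha sum.distrib sum_distrib_left)
  also have "\<dots> = a * real (degree n E i) + (1 - a) * real (degree n E i)"
    using i by (simp add: degree_eq_sum)
  finally show "(A_alpha n E a *\<^sub>v vec n (\<lambda>_. 1)) $ i = vec n (\<lambda>i. real (degree n E i)) $ i"
    using i by (simp add: algebra_simps)
qed (use A_alpha_carrier[of n E a] in simp)

lemma norm_A_alpha_mult_ones:
  "(A_alpha n E a *\<^sub>v vec n (\<lambda>_. 1)) \<bullet> (A_alpha n E a *\<^sub>v vec n (\<lambda>_. 1)) = real (zagreb1 n E)"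
  unfolding A_alpha_mult_ones by (simp add: norm_square_eq_sum[of _ n] zagreb1_def)


context
  fixes n :: nat and E :: "nat \<Rightarrow> nat \<Rightarrow> bool"
  assumes graph: "simple_graph n E"
begin

lemma sum_degree_eq_twice_num_edges: "(\<Sum>i<n. degree n E i) = 2 * num_edges n E"
proof -
  define P P1 P2 where "P = {(i, j). i < n \<and> j < n \<and> E i j}"
    and "P1 = {(i, j). i < j \<and> j < n \<and> E i j}" and "P2 = {(i, j). j < i \<and> i < n \<and> E i j}"
  have "finite P1" "finite P2"
    by (rule finite_subset[of _ "{..<n} \<times> {..<n}"], auto simp: P1_def P2_def)+
  moreover have "P = P1 \<union> P2" and "P1 \<inter> P2 = {}"
    using graph unfolding simple_graph_def P_def P1_def P2_def by (auto, metis linorder_neqE_nat)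
  ultimately have split: "card P = card P1 + card P2" by (simp add: card_Un_disjoint)
  have "P2 = (\<lambda>(i, j). (j, i)) ` P1"
    using graph unfolding simple_graph_def P1_def P2_def by (auto simp: image_iff)
  moreover have "inj_on (\<lambda>(i, j). (j, i)) P1" by (auto simp: inj_on_def)
  ultimately have "card P2 = card P1" by (simp add: card_image)
  moreover have "P = Sigma {..<n} (\<lambda>i. {j. j < n \<and> E i j})" unfolding P_def by auto
  then have "card P = (\<Sum>i<n. degree n E i)" by (simp add: card_SigmaI degree_def)
  ultimately show ?thesis using split by (simp add: num_edges_def P1_def)
qed

lemma num_edges_eq_0_if_zagreb1_eq_0:
  assumes "zagreb1 n E = 0"
  shows "num_edges n E = 0"
  using assms sum_degree_eq_twice_num_edges by (simp add: zagreb1_def)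

lemma index_A_alpha_simple:
  "i < n \<Longrightarrow> j < n \<Longrightarrow> A_alpha n E a $$ (i, j) =
    (if i = j then a * real (degree n E i) else (1 - a) * (if E i j then 1 else 0))"
  using graph by (auto simp: index_A_alpha simple_graph_def)

lemma A_alpha_symmetric: "transpose_mat (A_alpha n E a) = A_alpha n E a"
  using graph A_alpha_carrier[of n E a]
  by (intro eq_matI) (auto simp: index_A_alpha simple_graph_def)

lemma trace_A_alpha: "trace (A_alpha n E a) = 2 * a * real (num_edges n E)"
proof -
  have "trace (A_alpha n E a) = a * (\<Sum>i<n. real (degree n E i))"
    unfolding trace_def using A_alpha_carrier[of n E a]
    by (simp add: index_A_alpha_simple sum_distrib_left)
  also have "\<dots> = 2 * a * real (num_edges n E)"
    using arg_cong[OF sum_degree_eq_twice_num_edges, of real] by simp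
  finally show ?thesis .
qed

lemma trace_A_alpha_square:
  "trace (A_alpha n E a * A_alpha n E a)
    = 2 * real (num_edges n E) * (1 - a)\<^sup>2 + a\<^sup>2 * real (zagreb1 n E)"
proof -
  let ?A = "A_alpha n E a" and ?d = "\<lambda>i. real (degree n E i)"
  have "trace (?A * ?A) = (\<Sum>i<n. \<Sum>k<n. ?A $$ (i, k) * ?A $$ (k, i))"
    unfolding trace_def using A_alpha_carrier[of n E a]
    by (auto intro!: sum.cong simp: scalar_prod_def lessThan_atLeast0)
  also have "\<dots> = (\<Sum>i<n. \<Sum>k<n.
      (if i = k then a\<^sup>2 * (?d i)\<^sup>2 else 0) + (1 - a)\<^sup>2 * (if E i k then 1 else 0))"
    using graph
    by (intro sum.cong refl) (auto simp: index_A_alpha_simple simple_graph_def power2_eq_square)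
  also have "\<dots> = a\<^sup>2 * (\<Sum>i<n. (?d i)\<^sup>2) + (1 - a)\<^sup>2 * (\<Sum>i<n. ?d i)"
    by (simp add: sum.distrib degree_eq_sum sum_distrib_left)
  also have "\<dots> = 2 * real (num_edges n E) * (1 - a)\<^sup>2 + a\<^sup>2 * real (zagreb1 n E)"
    using arg_cong[OF sum_degree_eq_twice_num_edges, of real] by (simp add: zagreb1_def)
  finally show ?thesis .
qed

end

theorem theorem3p4:
  fixes n :: nat and E :: "nat \<Rightarrow> nat \<Rightarrow> bool" and a :: real
  assumes "simple_graph n E"
    and "0 \<le> a" and "a < alpha0 n E"
  shows "S_k (pos_inertia (A_alpha n E a)) (A_alpha n E a)
    \<le> 2 * a * real (num_edges n E)
       + (1/2) * (2 * real (num_edges n E) * (1 - a)^2 + a^2 * real (zagreb1 n E))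
         * sqrt (real n * (real n - real (pos_inertia (A_alpha n E a))) / real (zagreb1 n E))"
proof -
  note graph = assms(1)
  note A = A_alpha_carrier[of n E a] and sym = A_alpha_symmetric[OF graph, of a]
  show ?thesis
  proof (cases "zagreb1 n E = 0")
    case True
    then have "num_edges n E = 0" by (rule num_edges_eq_0_if_zagreb1_eq_0[OF graph])
    with True have "S_k (pos_inertia (A_alpha n E a)) (A_alpha n E a) = 0"
      by (intro S_k_eq_0_if_trace_square_eq_0[OF A sym]) (simp add: trace_A_alpha_square[OF graph])
    with True \<open>num_edges n E = 0\<close> show ?thesis by simp
  next
    case False
    let ?ones = "vec n (\<lambda>_. 1 :: real)"
    have "a \<le> 1" using assms(3) alpha0_le_1[of n E] by linarith
    moreover have "?ones \<bullet> ?ones = real n" by (simp add: norm_square_eq_sum[of _ n])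
    moreover have "(A_alpha n E a *\<^sub>v ?ones) \<bullet> (A_alpha n E a *\<^sub>v ?ones) = real (zagreb1 n E)"
      by (rule norm_A_alpha_mult_ones)
    ultimately show ?thesis
      using S_k_pos_inertia_le[OF A sym A_alpha_nonneg[OF assms(2)], of ?ones] False
      by (simp add: trace_A_alpha[OF graph] trace_A_alpha_square[OF graph] mult.commute)
  qed
qed

end
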